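(* Let $X$ be a countable two-dimensional subshift of finite type whose subpattern poset $(X/\!\approx, \succcurlyeq)$ has at least two elements. Then $X$ contains two doubly periodic points $x, y$ (i.e. each invariant under some shift by $(r,0)$ and by $(0,r)$ with $r>0$) with $x \not\approx y$.
   Context: A two-dimensional SFT is the set of configurations in $S^{\mathbb{Z}^2}$ ($S$ finite) avoiding a finite set of forbidden finite patterns. For configurations $x,y$, $x \succcurlyeq y$ means every finite pattern occurring in $y$ also occurs in $x$; $x \approx y$ means $x \succcurlyeq y$ and $y \succcurlyeq x$. The subpattern poset of $X$ is $(X/\!\approx, \succcurlyeq)$. *)

theory Defs
  imports Main "HOL-Library.Countable_Set"
begin

type_synonym 's config = "int \<times> int \<Rightarrow> 's"

type_synonym 's pattern = "int \<times> int \<Rightarrow> 's option"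

definition finite_pattern :: "'s pattern \<Rightarrow> bool" where
  "finite_pattern p \<longleftrightarrow> finite (dom p)"

definition occurs_in :: "'s pattern \<Rightarrow> 's config \<Rightarrow> bool" where
  "occurs_in p x \<longleftrightarrow> (\<exists>a b. \<forall>i j. (i, j) \<in> dom p \<longrightarrow> Some (x (i + a, j + b)) = p (i, j))"

definition is_SFT :: "('s::finite) config set \<Rightarrow> bool" where
  "is_SFT X \<longleftrightarrow> (\<exists>F. finite F \<and> (\<forall>p\<in>F. finite_pattern p) \<and>
      X = {x. \<forall>p\<in>F. \<not> occurs_in p x})"

definition subpat_ge :: "'s config \<Rightarrow> 's config \<Rightarrow> bool" where
  "subpat_ge x y \<longleftrightarrow> (\<forall>p. finite_pattern p \<longrightarrow> occurs_in p y \<longrightarrow> occurs_in p x)"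

definition subpat_equiv :: "'s config \<Rightarrow> 's config \<Rightarrow> bool" where
  "subpat_equiv x y \<longleftrightarrow> subpat_ge x y \<and> subpat_ge y x"

definition doubly_periodic :: "'s config \<Rightarrow> bool" where
  "doubly_periodic x \<longleftrightarrow> (\<exists>r::int. r > 0 \<and>
      (\<forall>i j. x (i + r, j) = x (i, j)) \<and> (\<forall>i j. x (i, j + r) = x (i, j)))"

end

theory Submission
  imports Defs "HOL-Analysis.Analysis"
begin

(* Proof outline.  Configurations carry the product topology of the discrete alphabet, which is
   compact and Hausdorff; an SFT is a closed, shift-invariant set of configurations.

   (1) Baire and Zorn.  If X is closed, shift-invariant and countable and E is closed and meets X,
       some z in X \<inter> E has only finitely many distinct translates inside E: in a minimal closed
       invariant subset M of X meeting E every point of M \<inter> E has dense orbit, M has an isolated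
       point (Baire), hence every point of M \<inter> E is isolated in M, so no infinite set of
       translates can accumulate in M \<inter> E.  With E = X this gives a doubly periodic point p.

   (2) Gluing.  Fix r with p (r,0)- and (0,r)-periodic; position v of z "fits" if the r-block of z
       around v occurs in p.  Where all positions of a half plane fit, z agrees there with a single
       translate of p.  If the non-fitting positions are bounded, or lie in a strip parallel to a
       period of z, we cut z along two such half planes and repeat the piece periodically; the result
       is doubly periodic, still avoids the forbidden patterns and agrees with z near the origin.

   Main theorem: otherwise all doubly periodic points are equivalent to p and fit everywhere.  The
   non-equivalent pair yields a point with a non-fitting position; (1) with E = "does not fit at 0"
   gives such a z whose non-fitting positions are finite or (z having a period) in a strip, and (2)
   produces a doubly periodic point of X not fitting at 0: a contradiction. *)

section \<open>The space of configurations\<close>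

definition box :: "int \<Rightarrow> (int \<times> int) set" where
  "box n = {-n..n} \<times> {-n..n}"

definition cyl :: "int \<Rightarrow> 's config \<Rightarrow> 's config set" where
  "cyl n x = {y. \<forall>u\<in>box n. y u = x u}"

definition conf_top :: "'s config topology" where
  "conf_top = product_topology (\<lambda>_. discrete_topology UNIV) UNIV"

definition cyl_closed :: "'s config set \<Rightarrow> bool" where
  "cyl_closed S \<longleftrightarrow> (\<forall>x. (\<forall>n. \<exists>y\<in>S. y \<in> cyl n x) \<longrightarrow> x \<in> S)"

lemma finite_box [simp]: "finite (box n)"
  by (simp add: box_def)

lemma mem_box: "u \<in> box n \<longleftrightarrow> \<bar>fst u\<bar> \<le> n \<and> \<bar>snd u\<bar> \<le> n"
  by (cases u) (simp add: box_def abs_le_iff, arith)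

lemma zero_in_box: "r \<ge> 0 \<Longrightarrow> (0::int \<times> int) \<in> box r"
  by (simp add: mem_box)

lemma finite_in_box: "finite A \<Longrightarrow> \<exists>n\<ge>0. A \<subseteq> box n"
proof (induction A rule: finite_induct)
  case empty
  then show ?case by auto
next
  case (insert a A)
  then obtain n where n: "n \<ge> 0" "A \<subseteq> box n" by auto
  define m where "m = max n (max \<bar>fst a\<bar> \<bar>snd a\<bar>)"
  have "box n \<subseteq> box m" by (auto simp: box_def m_def)
  moreover have "a \<in> box m" by (cases a) (auto simp: box_def m_def)
  ultimately show ?case using n by (intro exI[of _ m]) (auto simp: m_def)
qed

lemma cyl_self [simp]: "x \<in> cyl n x"
  by (simp add: cyl_def)

lemma cyl_sym: "y \<in> cyl n x \<Longrightarrow> x \<in> cyl n y"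
  by (simp add: cyl_def)

lemma cyl_trans: "y \<in> cyl n x \<Longrightarrow> z \<in> cyl n y \<Longrightarrow> z \<in> cyl n x"
  by (simp add: cyl_def)

lemma topspace_conf_top [simp]: "topspace conf_top = UNIV"
  by (simp add: conf_top_def PiE_UNIV_domain)

lemma compact_conf_top: "compact_space (conf_top :: ('s::finite) config topology)"
  unfolding conf_top_def compact_space_product_topology
  by (simp add: compact_space_discrete_topology)

lemma Hausdorff_conf_top: "Hausdorff_space conf_top"
  unfolding conf_top_def Hausdorff_space_product_topology by simp

lemma openin_cyl: "openin conf_top (cyl n x)"
  unfolding conf_top_def openin_product_topology_alt
proof (intro ballI)
  fix y assume y: "y \<in> cyl n x"
  define U where "U i = (if i \<in> box n then {x i} else UNIV)" for i
  have "{i \<in> UNIV. U i \<noteq> topspace (discrete_topology UNIV)} \<subseteq> box n"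
    by (auto simp: U_def)
  then have "finite {i \<in> UNIV. U i \<noteq> topspace (discrete_topology UNIV)}"
    using finite_subset finite_box by blast
  moreover have "y \<in> Pi\<^sub>E UNIV U"
    using y by (simp add: U_def cyl_def PiE_UNIV_domain Pi_iff)
  moreover have "Pi\<^sub>E UNIV U \<subseteq> cyl n x"
  proof
    fix f assume "f \<in> Pi\<^sub>E UNIV U"
    then have fu: "f u \<in> U u" for u by (rule PiE_mem) simp
    have "f u = x u" if "u \<in> box n" for u using fu[of u] that by (simp add: U_def)
    then show "f \<in> cyl n x" by (simp add: cyl_def)
  qed
  ultimately show "\<exists>U. finite {i \<in> UNIV. U i \<noteq> topspace (discrete_topology UNIV)} \<and>
      (\<forall>i\<in>UNIV. openin (discrete_topology UNIV) (U i)) \<and> y \<in> Pi\<^sub>E UNIV U \<and> Pi\<^sub>E UNIV U \<subseteq> cyl n x"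
    by auto
qed

lemma open_contains_cyl:
  assumes "openin conf_top U" "x \<in> U"
  shows "\<exists>n. cyl n x \<subseteq> U"
proof -
  from assms obtain V where V: "finite {i \<in> UNIV. V i \<noteq> topspace (discrete_topology UNIV)}"
    "x \<in> Pi\<^sub>E UNIV V" "Pi\<^sub>E UNIV V \<subseteq> U"
    unfolding conf_top_def openin_product_topology_alt by blast
  then obtain n where n: "{i. V i \<noteq> UNIV} \<subseteq> box n"
    using finite_in_box by fastforce
  have "cyl n x \<subseteq> Pi\<^sub>E UNIV V"
  proof
    fix y assume y: "y \<in> cyl n x"
    have "y i \<in> V i" for i
    proof (cases "i \<in> box n")
      case True
      then show ?thesis using y V(2) by (auto simp: cyl_def)
    next
      case False
      then show ?thesis using n by auto
    qed
    then show "y \<in> Pi\<^sub>E UNIV V" by auto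
  qed
  with V(3) show ?thesis by blast
qed

lemma cyl_closed_closedin:
  assumes "cyl_closed S"
  shows "closedin conf_top S"
proof -
  have "openin conf_top (UNIV - S)"
  proof (subst openin_subopen, intro ballI)
    fix x assume "x \<in> UNIV - S"
    with assms obtain n where "\<forall>y\<in>S. y \<notin> cyl n x"
      unfolding cyl_closed_def by blast
    then show "\<exists>T. openin conf_top T \<and> x \<in> T \<and> T \<subseteq> UNIV - S"
      by (intro exI[of _ "cyl n x"]) (auto simp: openin_cyl)
  qed
  then show ?thesis by (simp add: closedin_def)
qed

lemma cyl_closed_Int: "cyl_closed A \<Longrightarrow> cyl_closed B \<Longrightarrow> cyl_closed (A \<inter> B)"
  unfolding cyl_closed_def by blast

lemma cyl_closed_Inter: "\<forall>C\<in>\<C>. cyl_closed C \<Longrightarrow> cyl_closed (\<Inter>\<C>)"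
  unfolding cyl_closed_def by blast

section \<open>Compactness and the Baire category theorem\<close>

text \<open>Baire: a nonempty countable compact Hausdorff space has an isolated point, since it is
  the countable union of its (closed) singletons.\<close>
lemma countable_compact_Hausdorff_isolated:
  assumes "compact_space T" "Hausdorff_space T" "countable (topspace T)" "topspace T \<noteq> {}"
  shows "\<exists>x\<in>topspace T. openin T {x}"
proof (rule ccontr)
  assume no_isolated: "\<not> ?thesis"
  have "T interior_of \<Union>((\<lambda>x. {x}) ` topspace T) = {}"
  proof (rule Baire_category_alt)
    show "completely_metrizable_space T \<or> locally_compact_space T \<and> regular_space T"
      using assms(1,2) compact_Hausdorff_imp_regular_space compact_imp_locally_compact_space
      by blast
    show "countable ((\<lambda>x. {x}) ` topspace T)"
      using assms(3) by simp
    fix S assume "S \<in> (\<lambda>x. {x}) ` topspace T"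
    then obtain x where x: "x \<in> topspace T" "S = {x}" by blast
    have "T interior_of {x} = {}"
      using no_isolated x
      by (metis interior_of_subset openin_interior_of subset_singletonD)
    then show "closedin T S \<and> T interior_of S = {}"
      using assms(2) x by (simp add: closedin_Hausdorff_singleton)
  qed
  then show False
    using assms(4) by (simp add: interior_of_topspace)
qed

lemma countable_closed_isolated:
  fixes S :: "('s::finite) config set"
  assumes "countable S" "cyl_closed S" "S \<noteq> {}"
  shows "\<exists>x\<in>S. \<exists>n. \<forall>y\<in>S. y \<in> cyl n x \<longrightarrow> y = x"
proof -
  let ?Y = "subtopology conf_top S"
  have "closedin conf_top S"
    using assms(2) by (rule cyl_closed_closedin)
  then have "compact_space ?Y"
    using compact_conf_top closedin_compact_space compact_space_subtopology by blast
  moreover have "Hausdorff_space ?Y"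
    using Hausdorff_conf_top Hausdorff_space_subtopology by blast
  ultimately obtain x where x: "x \<in> S" "openin ?Y {x}"
    using countable_compact_Hausdorff_isolated[of ?Y] assms(1,3) by auto
  then obtain U where U: "openin conf_top U" "{x} = U \<inter> S"
    by (auto simp: openin_subtopology)
  then obtain n where "cyl n x \<subseteq> U"
    using open_contains_cyl by blast
  with U x(1) show ?thesis by blast
qed

lemma accumulation_point:
  fixes A :: "('s::finite) config set"
  assumes "infinite A" "A \<subseteq> S" "cyl_closed S"
  shows "\<exists>w\<in>S. \<forall>n. \<exists>y\<in>A. y \<noteq> w \<and> y \<in> cyl n w"
proof -
  obtain w where w: "w \<in> conf_top derived_set_of A"
    using compact_space_imp_Bolzano_Weierstrass[OF compact_conf_top assms(1)] by auto
  have acc: "\<forall>n. \<exists>y\<in>A. y \<noteq> w \<and> y \<in> cyl n w"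
  proof
    fix n
    show "\<exists>y\<in>A. y \<noteq> w \<and> y \<in> cyl n w"
      using w openin_cyl[of n w] cyl_self[of w n] unfolding in_derived_set_of by blast
  qed
  then have "w \<in> S"
    using assms(2,3) unfolding cyl_closed_def by blast
  with acc show ?thesis by blast
qed

lemma chain_Inter_meets:
  fixes E :: "('s::finite) config set"
  assumes "\<C> \<noteq> {}" "\<forall>C\<in>\<C>. cyl_closed C \<and> C \<inter> E \<noteq> {}" "cyl_closed E" "chain\<^sub>\<subseteq> \<C>"
  shows "\<Inter>\<C> \<inter> E \<noteq> {}"
proof -
  let ?U = "(\<lambda>C. C \<inter> E) ` \<C>"
  have "\<Inter>?U \<noteq> {}"
  proof (rule compact_conf_top[unfolded compact_space_fip, rule_format], intro conjI ballI allI impI)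
    fix C assume "C \<in> ?U"
    then show "closedin conf_top C"
      using assms(2,3) cyl_closed_Int cyl_closed_closedin by blast
  next
    fix F assume F: "finite F \<and> F \<subseteq> ?U"
    then obtain G where G: "G \<subseteq> \<C>" "finite G" "F = (\<lambda>C. C \<inter> E) ` G"
      by (meson finite_subset_image)
    show "\<Inter>F \<noteq> {}"
    proof (cases "G = {}")
      case True
      then show ?thesis using G by simp
    next
      case False
      have "subset.chain UNIV G"
        using assms(4) G(1) unfolding chain_subset_alt_def subset.chain_def by blast
      then have "\<Inter>G \<in> G"
        using Inter_in_chain G(2) False by blast
      then have "\<Inter>G \<inter> E \<noteq> {}"
        using assms(2) G(1) by blast
      moreover have "\<Inter>F = \<Inter>G \<inter> E"
        using G(3) False by auto
      ultimately show ?thesis by simp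
    qed
  qed
  moreover have "\<Inter>?U = \<Inter>\<C> \<inter> E"
    using assms(1) by auto
  ultimately show ?thesis by simp
qed

lemma Zorn_minimal:
  assumes "\<A> \<noteq> {}"
    and chain: "\<And>\<C>. \<C> \<subseteq> \<A> \<Longrightarrow> \<C> \<noteq> {} \<Longrightarrow> chain\<^sub>\<subseteq> \<C> \<Longrightarrow> \<Inter>\<C> \<in> \<A>"
  shows "\<exists>M\<in>\<A>. \<forall>Y\<in>\<A>. Y \<subseteq> M \<longrightarrow> Y = M"
proof (rule predicate_Zorn[where P = "\<lambda>A B. B \<subseteq> A"])
  show "partial_order_on \<A> (relation_of (\<lambda>A B. B \<subseteq> A) \<A>)"
    unfolding relation_of_def partial_order_on_def preorder_on_def refl_on_def trans_on_def
      antisym_on_def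
    by auto
next
  fix \<C> assume C: "\<C> \<in> Chains (relation_of (\<lambda>A B. B \<subseteq> A) \<A>)"
  show "\<exists>u\<in>\<A>. \<forall>a\<in>\<C>. u \<subseteq> a"
  proof (cases "\<C> = {}")
    case True
    then show ?thesis using assms(1) by blast
  next
    case False
    have "\<C> \<subseteq> \<A>" "chain\<^sub>\<subseteq> \<C>"
      using C unfolding Chains_def relation_of_def chain_subset_def by blast+
    then show ?thesis using chain False by blast
  qed
qed

section \<open>Shifts, orbit closures and finitely many translates\<close>

definition shift :: "int \<times> int \<Rightarrow> 's config \<Rightarrow> 's config" where
  "shift s x = (\<lambda>u. x (u + s))"

definition shift_inv :: "'s config set \<Rightarrow> bool" where
  "shift_inv S \<longleftrightarrow> (\<forall>x\<in>S. \<forall>s. shift s x \<in> S)"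

definition orbit_cl :: "'s config \<Rightarrow> 's config set" where
  "orbit_cl z = {w. \<forall>n. \<exists>s. shift s z \<in> cyl n w}"

definition isolated_pt :: "'s config set \<Rightarrow> 's config \<Rightarrow> bool" where
  "isolated_pt S x \<longleftrightarrow> x \<in> S \<and> (\<exists>n. \<forall>y\<in>S. y \<in> cyl n x \<longrightarrow> y = x)"

lemma shift_shift [simp]: "shift a (shift b x) = shift (a + b) x"
  by (rule ext) (simp add: shift_def add_ac)

lemma shift_0 [simp]: "shift 0 x = x"
  by (simp add: shift_def)

lemma shift_cyl:
  assumes "y \<in> cyl (n + \<bar>fst s\<bar> + \<bar>snd s\<bar>) x"
  shows "shift s y \<in> cyl n (shift s x)"
proof -
  have "u + s \<in> box (n + \<bar>fst s\<bar> + \<bar>snd s\<bar>)" if "u \<in> box n" for u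
    using that abs_triangle_ineq[of "fst u" "fst s"] abs_triangle_ineq[of "snd u" "snd s"]
      abs_ge_zero[of "fst s"] abs_ge_zero[of "snd s"]
    unfolding mem_box fst_add snd_add by linarith
  with assms show ?thesis
    unfolding cyl_def shift_def by blast
qed

lemma orbit_cl_self: "z \<in> orbit_cl z"
proof -
  have "\<forall>n. shift 0 z \<in> cyl n z" by simp
  then show ?thesis unfolding orbit_cl_def by blast
qed

lemma orbit_cl_closed: "cyl_closed (orbit_cl z)"
  unfolding cyl_closed_def
proof (intro allI impI)
  fix x assume "\<forall>n. \<exists>y\<in>orbit_cl z. y \<in> cyl n x"
  then have "\<exists>s. shift s z \<in> cyl n x" for n
    unfolding orbit_cl_def by (blast intro: cyl_trans cyl_sym)
  then show "x \<in> orbit_cl z"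
    unfolding orbit_cl_def by blast
qed

lemma orbit_cl_shift_inv: "shift_inv (orbit_cl z)"
  unfolding shift_inv_def
proof (intro ballI allI)
  fix w s assume w: "w \<in> orbit_cl z"
  show "shift s w \<in> orbit_cl z"
    unfolding orbit_cl_def
  proof (intro CollectI allI)
    fix n
    obtain t where "shift t z \<in> cyl (n + \<bar>fst s\<bar> + \<bar>snd s\<bar>) w"
      using w unfolding orbit_cl_def by blast
    then have "shift s (shift t z) \<in> cyl n (shift s w)"
      by (rule shift_cyl)
    then show "\<exists>t. shift t z \<in> cyl n (shift s w)"
      by (metis shift_shift)
  qed
qed

lemma orbit_cl_subset:
  assumes "cyl_closed C" "shift_inv C" "z \<in> C"
  shows "orbit_cl z \<subseteq> C"
proof
  fix w assume "w \<in> orbit_cl z"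
  then have "\<forall>n. \<exists>y\<in>C. y \<in> cyl n w"
    using assms(2,3) unfolding orbit_cl_def shift_inv_def by blast
  then show "w \<in> C"
    using assms(1) unfolding cyl_closed_def by blast
qed

lemma isolated_pt_shift:
  assumes "shift_inv C" "isolated_pt C x"
  shows "isolated_pt C (shift s x)"
proof -
  obtain n where n: "\<forall>y\<in>C. y \<in> cyl n x \<longrightarrow> y = x" "x \<in> C"
    using assms(2) unfolding isolated_pt_def by blast
  let ?m = "n + \<bar>fst (-s)\<bar> + \<bar>snd (-s)\<bar>"
  have "y = shift s x" if y: "y \<in> C" "y \<in> cyl ?m (shift s x)" for y
  proof -
    have "shift (-s) y \<in> cyl n x"
      using shift_cyl[OF y(2)] by simp
    moreover have "shift (-s) y \<in> C"
      using y(1) assms(1) unfolding shift_inv_def by blast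
    ultimately have "shift (-s) y = x"
      using n by blast
    then show ?thesis by auto
  qed
  moreover have "shift s x \<in> C"
    using n(2) assms(1) unfolding shift_inv_def by blast
  ultimately show ?thesis
    unfolding isolated_pt_def by blast
qed

lemma isolated_pt_in_orbit_cl:
  assumes "shift_inv C" "z \<in> C" "isolated_pt C u" "u \<in> orbit_cl z"
  shows "\<exists>s. u = shift s z"
proof -
  obtain n where n: "\<forall>y\<in>C. y \<in> cyl n u \<longrightarrow> y = u"
    using assms(3) unfolding isolated_pt_def by blast
  obtain s where "shift s z \<in> cyl n u"
    using assms(4) unfolding orbit_cl_def by blast
  moreover have "shift s z \<in> C"
    using assms(1,2) unfolding shift_inv_def by blast
  ultimately show ?thesis using n by metis
qed

text \<open>Zorn: X contains a closed invariant set M meeting E that is minimal, hence the orbit of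
  every point of M \<inter> E is dense in M.\<close>
lemma minimal_invariant_subset:
  fixes X :: "('s::finite) config set"
  assumes X: "cyl_closed X" "shift_inv X" and E: "cyl_closed E" "X \<inter> E \<noteq> {}"
  shows "\<exists>M\<subseteq>X. cyl_closed M \<and> shift_inv M \<and> M \<inter> E \<noteq> {} \<and> (\<forall>w\<in>M \<inter> E. orbit_cl w = M)"
proof -
  define \<A> where "\<A> = {C. C \<subseteq> X \<and> cyl_closed C \<and> shift_inv C \<and> C \<inter> E \<noteq> {}}"
  have "\<exists>M\<in>\<A>. \<forall>Y\<in>\<A>. Y \<subseteq> M \<longrightarrow> Y = M"
  proof (rule Zorn_minimal)
    show "\<A> \<noteq> {}"
      using X E unfolding \<A>_def by blast
    fix \<C> assume C: "\<C> \<subseteq> \<A>" "\<C> \<noteq> {}" "chain\<^sub>\<subseteq> \<C>"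
    have "\<Inter>\<C> \<inter> E \<noteq> {}"
      using chain_Inter_meets[OF C(2) _ E(1) C(3)] C(1) unfolding \<A>_def by blast
    then show "\<Inter>\<C> \<in> \<A>"
      using C(1,2) cyl_closed_Inter unfolding \<A>_def shift_inv_def by blast
  qed
  then obtain M where M: "M \<in> \<A>" "\<forall>Y\<in>\<A>. Y \<subseteq> M \<longrightarrow> Y = M" by blast
  have "orbit_cl w = M" if "w \<in> M \<inter> E" for w
  proof -
    have "orbit_cl w \<subseteq> M"
      using orbit_cl_subset M(1) that unfolding \<A>_def by blast
    moreover from this have "orbit_cl w \<in> \<A>"
      using orbit_cl_closed orbit_cl_shift_inv orbit_cl_self that M(1) unfolding \<A>_def by blast
    ultimately show ?thesis using M(2) by blast
  qed
  with M(1) show ?thesis unfolding \<A>_def by blast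
qed

text \<open>In such a minimal set, if it is countable, every point of M \<inter> E is isolated: Baire gives
  one isolated point, which is a translate of each w \<in> M \<inter> E.\<close>
lemma minimal_invariant_isolated:
  fixes M :: "('s::finite) config set"
  assumes "countable M" "cyl_closed M" "shift_inv M" "w \<in> M \<inter> E" "orbit_cl w = M"
  shows "isolated_pt M w"
proof -
  obtain u where u: "isolated_pt M u"
    using countable_closed_isolated[of M] assms(1,2,4) unfolding isolated_pt_def by blast
  then obtain s where "u = shift s w"
    using isolated_pt_in_orbit_cl[OF assms(3) _ u] assms(4,5) unfolding isolated_pt_def by blast
  then have "w = shift (-s) u" by simp
  then show ?thesis
    using isolated_pt_shift[OF assms(3) u] by simp
qed

lemma finite_translates_in:
  fixes X :: "('s::finite) config set"
  assumes X: "cyl_closed X" "shift_inv X" "countable X" and E: "cyl_closed E" "X \<inter> E \<noteq> {}"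
  shows "\<exists>z\<in>X \<inter> E. \<forall>V. (\<forall>v\<in>V. shift v z \<in> E) \<longrightarrow> finite ((\<lambda>v. shift v z) ` V)"
proof -
  obtain M where M: "M \<subseteq> X" "cyl_closed M" "shift_inv M" "M \<inter> E \<noteq> {}"
    and dense: "\<forall>w\<in>M \<inter> E. orbit_cl w = M"
    using minimal_invariant_subset[OF X(1,2) E] by blast
  have "countable M"
    using M(1) X(3) countable_subset by blast
  then have isolated: "isolated_pt M w" if "w \<in> M \<inter> E" for w
    using minimal_invariant_isolated M(2,3) dense that by blast
  obtain z where z: "z \<in> M \<inter> E"
    using M(4) by blast
  have "finite ((\<lambda>v. shift v z) ` V)" if V: "\<forall>v\<in>V. shift v z \<in> E" for V
  proof (rule ccontr)
    assume inf: "infinite ((\<lambda>v. shift v z) ` V)"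
    have sub: "(\<lambda>v. shift v z) ` V \<subseteq> M \<inter> E"
      using V z M(3) unfolding shift_inv_def by blast
    obtain w where w: "w \<in> M \<inter> E" "\<forall>n. \<exists>y\<in>(\<lambda>v. shift v z) ` V. y \<noteq> w \<and> y \<in> cyl n w"
      using accumulation_point[OF inf sub cyl_closed_Int[OF M(2) E(1)]] by blast
    obtain n where "\<forall>y\<in>M. y \<in> cyl n w \<longrightarrow> y = w"
      using isolated[OF w(1)] unfolding isolated_pt_def by blast
    with w(2) sub show False by blast
  qed
  with z M(1) show ?thesis by blast
qed

section \<open>Periods\<close>

definition period :: "int \<times> int \<Rightarrow> 's config \<Rightarrow> bool" where
  "period d z \<longleftrightarrow> (\<forall>u. z (u + d) = z u)"

definition smul :: "int \<Rightarrow> int \<times> int \<Rightarrow> int \<times> int" where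
  "smul k v = (k * fst v, k * snd v)"

lemma smul_simps [simp]: "fst (smul k v) = k * fst v" "snd (smul k v) = k * snd v"
  by (simp_all add: smul_def)

lemma period_sub: "period d z \<Longrightarrow> z (u - d) = z u"
  unfolding period_def by (metis diff_add_cancel)

lemma period_neg:
  assumes "period d z"
  shows "period (-d) z"
  unfolding period_def
proof
  fix u
  show "z (u + -d) = z u" using period_sub[OF assms, of u] by simp
qed

lemma period_add:
  assumes "period d z" "period e z"
  shows "period (d + e) z"
  unfolding period_def
proof
  fix u
  have "z ((u + d) + e) = z (u + d)" "z (u + d) = z u"
    using assms unfolding period_def by blast+
  then show "z (u + (d + e)) = z u" by (simp add: add.assoc)
qed

lemma period_smul:
  assumes "period d z"
  shows "period (smul k d) z"
proof -
  have nat: "period (smul (int n) d) z" for n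
  proof (induction n)
    case 0
    then show ?case by (simp add: period_def smul_def zero_prod_def)
  next
    case (Suc n)
    have "smul (int (Suc n)) d = smul (int n) d + d"
      by (simp add: smul_def algebra_simps plus_prod_def)
    then show ?case using period_add Suc assms by metis
  qed
  show ?thesis
  proof (cases "k \<ge> 0")
    case True
    then show ?thesis using nat by (metis nonneg_eq_int)
  next
    case False
    then obtain n where n: "k = - int n" by (metis nonpos_int_cases linear)
    have "smul k d = - smul (int n) d"
      by (simp add: smul_def n uminus_prod_def)
    then show ?thesis using period_neg nat by metis
  qed
qed

lemma period_Pair: "period (a, b) z \<longleftrightarrow> (\<forall>i j. z (i + a, j + b) = z (i, j))"
  unfolding period_def by auto

lemma doubly_periodic_periods:
  "doubly_periodic z \<Longrightarrow> \<exists>r>0. period (r, 0) z \<and> period (0, r) z"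
  unfolding doubly_periodic_def period_Pair by auto

text \<open>Two linearly independent periods d, e make a configuration doubly periodic: the
  determinant D gives the periods (D,0) and (0,D) as integer combinations of d and e.\<close>
lemma two_periods_doubly_periodic:
  assumes "period d z" "period e z" "fst d * snd e - snd d * fst e \<noteq> 0"
  shows "doubly_periodic z"
proof -
  define D where "D = \<bar>fst d * snd e - snd d * fst e\<bar>"
  define \<sigma> where "\<sigma> = sgn (fst d * snd e - snd d * fst e)"
  have "(D, 0) = smul (\<sigma> * snd e) d + smul (- \<sigma> * snd d) e"
    "(0, D) = smul (- \<sigma> * fst e) d + smul (\<sigma> * fst d) e"
    unfolding D_def \<sigma>_def by (simp_all add: smul_def prod_eq_iff abs_sgn algebra_simps)
  then have "period (D, 0) z" "period (0, D) z"
    using period_add period_smul assms(1,2) by metis+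
  moreover have "D > 0"
    using assms(3) unfolding D_def by simp
  ultimately show ?thesis
    unfolding doubly_periodic_def period_Pair by (intro exI[of _ D]) simp
qed

lemma shift_eq_period:
  assumes "shift v z = shift v' z"
  shows "period (v - v') z"
  unfolding period_def
proof
  fix u
  have "shift v z (u - v') = shift v' z (u - v')" using assms by simp
  then show "z (u + (v - v')) = z u" by (simp add: shift_def algebra_simps)
qed

text \<open>A configuration with finitely many distinct translates is doubly periodic: along each
  coordinate axis two translates coincide.\<close>
lemma finite_orbit_doubly_periodic:
  assumes "finite (range (\<lambda>v. shift v z))"
  shows "doubly_periodic z"
proof -
  have axis_period: "\<exists>a. a \<noteq> 0 \<and> period (smul a w) z" for w :: "int \<times> int"
  proof -
    let ?f = "\<lambda>k::nat. shift (smul (int k) w) z"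
    have "finite (range ?f)"
      using assms by (rule finite_subset[rotated]) auto
    then have "\<not> inj ?f"
      using finite_imageD by auto
    then obtain i j where ij: "i \<noteq> j" "?f i = ?f j"
      unfolding inj_def by blast
    then have "period (smul (int i) w - smul (int j) w) z"
      using shift_eq_period by blast
    moreover have "smul (int i) w - smul (int j) w = smul (int i - int j) w"
      by (simp add: prod_eq_iff algebra_simps)
    ultimately show ?thesis
      using ij(1) by (intro exI[of _ "int i - int j"]) simp
  qed
  obtain a where a: "a \<noteq> 0" "period (smul a (1, 0)) z"
    using axis_period by blast
  obtain b where b: "b \<noteq> 0" "period (smul b (0, 1)) z"
    using axis_period by blast
  show ?thesis
    by (rule two_periods_doubly_periodic[OF a(2) b(2)]) (simp add: a(1) b(1))
qed

lemma doubly_periodic_point_exists: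
  fixes X :: "('s::finite) config set"
  assumes "cyl_closed X" "shift_inv X" "countable X" "X \<noteq> {}"
  shows "\<exists>p\<in>X. doubly_periodic p"
proof -
  obtain p where p: "p \<in> X" "\<forall>V. (\<forall>v\<in>V. shift v p \<in> X) \<longrightarrow> finite ((\<lambda>v. shift v p) ` V)"
    using finite_translates_in[OF assms(1-3) assms(1)] assms(4) by auto
  have "\<forall>v\<in>UNIV. shift v p \<in> X"
    using p(1) assms(2) unfolding shift_inv_def by blast
  then have "finite (range (\<lambda>v. shift v p))"
    using p(2) by blast
  then show ?thesis
    using p(1) finite_orbit_doubly_periodic by blast
qed

section \<open>Blocks that occur in a periodic configuration\<close>

text \<open>Position v of z fits into p (at radius r) if the r-block of z around v occurs in p.  The
  aligned copy is then the translate of p that agrees with z on this block.\<close>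
definition fits :: "'s config \<Rightarrow> int \<Rightarrow> 's config \<Rightarrow> int \<times> int \<Rightarrow> bool" where
  "fits p r z v \<longleftrightarrow> (\<exists>t. \<forall>u\<in>box r. z (v + u) = p (t + u))"

definition align_offset :: "'s config \<Rightarrow> int \<Rightarrow> 's config \<Rightarrow> int \<times> int \<Rightarrow> int \<times> int" where
  "align_offset p r z v = (SOME t. \<forall>u\<in>box r. z (v + u) = p (t + u)) - v"

definition aligned_copy :: "'s config \<Rightarrow> int \<Rightarrow> 's config \<Rightarrow> int \<times> int \<Rightarrow> 's config" where
  "aligned_copy p r z v = (\<lambda>x. p (x + align_offset p r z v))"

lemma fits_aligned_copy:
  assumes "fits p r z v" "u \<in> box r"
  shows "z (v + u) = aligned_copy p r z v (v + u)"
proof -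
  let ?t = "SOME t. \<forall>u\<in>box r. z (v + u) = p (t + u)"
  have t: "\<forall>u\<in>box r. z (v + u) = p (?t + u)"
    using assms(1) unfolding fits_def by (rule someI_ex)
  have eq: "v + u + (?t - v) = ?t + u"
    by (simp add: prod_eq_iff)
  have "aligned_copy p r z v (v + u) = p (v + u + (?t - v))"
    by (simp only: aligned_copy_def align_offset_def)
  also have "\<dots> = p (?t + u)"
    by (simp only: eq)
  also have "\<dots> = z (v + u)"
    using t assms(2) by simp
  finally show ?thesis by simp
qed

lemma fits_self: "fits p r z v \<Longrightarrow> r \<ge> 0 \<Longrightarrow> z v = aligned_copy p r z v v"
  using fits_aligned_copy[of p r z v 0] zero_in_box by simp

lemma period_aligned_copy:
  assumes "period d p"
  shows "period d (aligned_copy p r z v)"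
  unfolding period_def aligned_copy_def
proof
  fix u
  have "p ((u + align_offset p r z v) + d) = p (u + align_offset p r z v)"
    using assms unfolding period_def by blast
  then show "p (u + d + align_offset p r z v) = p (u + align_offset p r z v)"
    by (simp add: add_ac)
qed

lemma periodic_agree_on_square:
  fixes f g :: "'s config"
  assumes r: "r > 0"
    and f: "period (r, 0) f" "period (0, r) f" and g: "period (r, 0) g" "period (0, r) g"
    and agree: "\<And>x. a1 \<le> fst x \<Longrightarrow> fst x < a1 + r \<Longrightarrow> a2 \<le> snd x \<Longrightarrow> snd x < a2 + r \<Longrightarrow> f x = g x"
  shows "f = g"
proof
  fix x :: "int \<times> int"
  define q1 where "q1 = (fst x - a1) div r"
  define q2 where "q2 = (snd x - a2) div r"
  define x' where "x' = (a1 + (fst x - a1) mod r, a2 + (snd x - a2) mod r)"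
  have x: "x = x' + smul q1 (r, 0) + smul q2 (0, r)"
    unfolding x'_def q1_def q2_def by (simp add: prod_eq_iff)
  have reduce: "h x = h x'" if "period (r, 0) h" "period (0, r) h" for h :: "'s config"
  proof -
    have "h (x' + smul q1 (r, 0) + smul q2 (0, r)) = h (x' + smul q1 (r, 0))"
      using period_smul[OF that(2), of q2] unfolding period_def by blast
    also have "\<dots> = h x'"
      using period_smul[OF that(1), of q1] unfolding period_def by blast
    finally show ?thesis using x by simp
  qed
  have "f x' = g x'"
    by (rule agree) (simp_all add: x'_def r)
  then show "f x = g x"
    using reduce[OF f] reduce[OF g] by simp
qed

text \<open>Neighbouring fitting positions have the same aligned copy: their r-blocks overlap in an
  r \<times> r square.\<close>
lemma aligned_copy_step:
  assumes r: "r > 0" and p: "period (r, 0) p" "period (0, r) p"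
    and e: "e = (1, 0) \<or> e = (0, 1)"
    and fits: "fits p r z v" "fits p r z (v + e)"
  shows "aligned_copy p r z v = aligned_copy p r z (v + e)"
proof (rule periodic_agree_on_square[OF r period_aligned_copy[OF p(1)] period_aligned_copy[OF p(2)]
      period_aligned_copy[OF p(1)] period_aligned_copy[OF p(2)]])
  fix x :: "int \<times> int"
  assume x: "fst v - r + fst e \<le> fst x" "fst x < fst v - r + fst e + r"
    "snd v - r + snd e \<le> snd x" "snd x < snd v - r + snd e + r"
  have e01: "0 \<le> fst e" "fst e \<le> 1" "0 \<le> snd e" "snd e \<le> 1"
    using e by auto
  have "x - v \<in> box r" "x - (v + e) \<in> box r"
    unfolding mem_box using x e01 by (simp_all add: abs_le_iff)
  then have "z x = aligned_copy p r z v x" "z x = aligned_copy p r z (v + e) x"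
    using fits_aligned_copy[OF fits(1), of "x - v"] fits_aligned_copy[OF fits(2), of "x - (v + e)"]
    by simp_all
  then show "aligned_copy p r z v x = aligned_copy p r z (v + e) x" by simp
qed

text \<open>Half planes are described by integer linear functionals.\<close>
definition lin :: "int \<Rightarrow> int \<Rightarrow> int \<times> int \<Rightarrow> int" where
  "lin a b v = a * fst v + b * snd v"

lemma lin_add [simp]: "lin a b (u + v) = lin a b u + lin a b v"
  by (simp add: lin_def algebra_simps)

lemma lin_diff [simp]: "lin a b (u - v) = lin a b u - lin a b v"
  by (simp add: lin_def algebra_simps)

lemma lin_smul [simp]: "lin a b (smul k v) = k * lin a b v"
  by (simp add: lin_def algebra_simps)

lemma lin_neg [simp]: "lin (-a) (-b) v = - lin a b v"
  by (simp add: lin_def)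

lemma lin_bound: "u \<in> box m \<Longrightarrow> \<bar>lin \<alpha> \<beta> u\<bar> \<le> m * (\<bar>\<alpha>\<bar> + \<bar>\<beta>\<bar>)"
proof -
  assume "u \<in> box m"
  then have u: "\<bar>fst u\<bar> \<le> m" "\<bar>snd u\<bar> \<le> m"
    by (simp_all add: mem_box)
  have "\<bar>\<alpha> * fst u\<bar> \<le> \<bar>\<alpha>\<bar> * m" "\<bar>\<beta> * snd u\<bar> \<le> \<bar>\<beta>\<bar> * m"
    unfolding abs_mult by (simp_all add: mult_left_mono u)
  moreover have "\<bar>lin \<alpha> \<beta> u\<bar> \<le> \<bar>\<alpha> * fst u\<bar> + \<bar>\<beta> * snd u\<bar>"
    unfolding lin_def by (rule abs_triangle_ineq)
  ultimately show ?thesis by (simp add: algebra_simps)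
qed

lemma aligned_copy_segment:
  assumes r: "r > 0" and p: "period (r, 0) p" "period (0, r) p"
    and e: "e = (1, 0) \<or> e = (0, 1)"
    and G: "\<forall>v. lin \<alpha> \<beta> v > c \<longrightarrow> fits p r z v"
    and x: "lin \<alpha> \<beta> x > c" and xk: "lin \<alpha> \<beta> (x + smul (int k) e) > c"
  shows "aligned_copy p r z x = aligned_copy p r z (x + smul (int k) e)"
proof -
  have inside: "lin \<alpha> \<beta> (x + smul (int j) e) > c" if "j \<le> k" for j
  proof (cases "lin \<alpha> \<beta> e \<ge> 0")
    case True
    then have "0 \<le> int j * lin \<alpha> \<beta> e" by simp
    then show ?thesis using x by simp
  next
    case False
    have "int k * lin \<alpha> \<beta> e \<le> int j * lin \<alpha> \<beta> e"
      using False that by (intro mult_right_mono_neg) simp_all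
    then show ?thesis using xk by simp
  qed
  have "j \<le> k \<longrightarrow> aligned_copy p r z x = aligned_copy p r z (x + smul (int j) e)" for j
  proof (induction j)
    case 0
    have "x + smul (int 0) e = x" by (simp add: prod_eq_iff)
    then show ?case by simp
  next
    case (Suc j)
    let ?w = "x + smul (int j) e"
    have eq: "x + smul (int (Suc j)) e = ?w + e"
      by (simp add: prod_eq_iff algebra_simps)
    show ?case
    proof
      assume j: "Suc j \<le> k"
      have "fits p r z ?w"
        using j by (intro G[rule_format] inside) simp
      moreover have "fits p r z (?w + e)"
        unfolding eq[symmetric] using j by (intro G[rule_format] inside) simp
      ultimately have "aligned_copy p r z ?w = aligned_copy p r z (?w + e)"
        by (rule aligned_copy_step[OF r p e])
      with Suc.IH j show "aligned_copy p r z x = aligned_copy p r z (x + smul (int (Suc j)) e)"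
        unfolding eq by simp
    qed
  qed
  then show ?thesis by simp
qed

lemma aligned_copy_line:
  assumes r: "r > 0" and p: "period (r, 0) p" "period (0, r) p"
    and e: "e = (1, 0) \<or> e = (0, 1)"
    and G: "\<forall>v. lin \<alpha> \<beta> v > c \<longrightarrow> fits p r z v"
    and x: "lin \<alpha> \<beta> x > c" and xk: "lin \<alpha> \<beta> (x + smul k e) > c"
  shows "aligned_copy p r z x = aligned_copy p r z (x + smul k e)"
proof (cases "k \<ge> 0")
  case True
  then show ?thesis
    using aligned_copy_segment[OF r p e G x, of "nat k"] xk by simp
next
  case False
  let ?y = "x + smul k e"
  have eq: "?y + smul (int (nat (- k))) e = x"
    using False by (simp add: prod_eq_iff)
  have "aligned_copy p r z ?y = aligned_copy p r z (?y + smul (int (nat (- k))) e)"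
    by (rule aligned_copy_segment[OF r p e G xk]) (simp only: eq x)
  then show ?thesis by (simp only: eq)
qed

text \<open>Any two points of the half plane are joined by an axis-parallel path with one corner inside
  it, so the aligned copy is constant on the half plane.\<close>
lemma aligned_copy_half_plane:
  assumes r: "r > 0" and p: "period (r, 0) p" "period (0, r) p"
    and G: "\<forall>v. lin \<alpha> \<beta> v > c \<longrightarrow> fits p r z v"
    and x: "lin \<alpha> \<beta> x > c" and y: "lin \<alpha> \<beta> y > c"
  shows "aligned_copy p r z x = aligned_copy p r z y"
proof -
  define m1 where "m1 = x + smul (fst y - fst x) (1, 0)"
  define m2 where "m2 = x + smul (snd y - snd x) (0, 1)"
  have y1: "y = m1 + smul (snd y - snd x) (0, 1)" and y2: "y = m2 + smul (fst y - fst x) (1, 0)"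
    by (simp_all add: m1_def m2_def prod_eq_iff)
  have "lin \<alpha> \<beta> m1 + lin \<alpha> \<beta> m2 = lin \<alpha> \<beta> x + lin \<alpha> \<beta> y"
    by (simp add: m1_def m2_def lin_def algebra_simps)
  then have "lin \<alpha> \<beta> m1 > c \<or> lin \<alpha> \<beta> m2 > c"
    using x y by linarith
  then show ?thesis
  proof
    assume m: "lin \<alpha> \<beta> m1 > c"
    have "aligned_copy p r z x = aligned_copy p r z m1"
      unfolding m1_def by (rule aligned_copy_line[OF r p _ G x]) (use m m1_def in auto)
    also have "\<dots> = aligned_copy p r z y"
      using aligned_copy_line[OF r p _ G m, of "(0, 1)" "snd y - snd x"] y y1 by simp
    finally show ?thesis .
  next
    assume m: "lin \<alpha> \<beta> m2 > c"
    have "aligned_copy p r z x = aligned_copy p r z m2"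
      unfolding m2_def by (rule aligned_copy_line[OF r p _ G x]) (use m m2_def in auto)
    also have "\<dots> = aligned_copy p r z y"
      using aligned_copy_line[OF r p _ G m, of "(1, 0)" "fst y - fst x"] y y2 by simp
    finally show ?thesis .
  qed
qed

lemma copy_on_half_plane:
  assumes r: "r > 0" and p: "period (r, 0) p" "period (0, r) p" and nonzero: "(\<alpha>, \<beta>) \<noteq> (0, 0)"
    and G: "\<forall>v. lin \<alpha> \<beta> v > c \<longrightarrow> fits p r z v"
  shows "\<exists>s. \<forall>v. lin \<alpha> \<beta> v > c \<longrightarrow> z v = p (v + s)"
proof -
  define a where "a = smul (\<bar>c\<bar> + 1) (\<alpha>, \<beta>)"
  have "0 < \<alpha> * \<alpha> + \<beta> * \<beta>"
    using nonzero by (simp add: sum_squares_gt_zero_iff)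
  then have "\<bar>c\<bar> + 1 \<le> (\<bar>c\<bar> + 1) * (\<alpha> * \<alpha> + \<beta> * \<beta>)"
    using mult_left_mono[of 1 "\<alpha> * \<alpha> + \<beta> * \<beta>" "\<bar>c\<bar> + 1"] by simp
  moreover have "lin \<alpha> \<beta> a = (\<bar>c\<bar> + 1) * (\<alpha> * \<alpha> + \<beta> * \<beta>)"
    by (simp add: a_def lin_def algebra_simps)
  ultimately have a: "lin \<alpha> \<beta> a > c"
    using abs_ge_self[of c] by linarith
  have "z v = p (v + align_offset p r z a)" if "lin \<alpha> \<beta> v > c" for v
  proof -
    have "z v = aligned_copy p r z v v"
      using fits_self[OF G[rule_format, OF that]] r by simp
    also have "aligned_copy p r z v = aligned_copy p r z a"
      by (rule aligned_copy_half_plane[OF r p G that a])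
    finally show ?thesis by (simp add: aligned_copy_def)
  qed
  then show ?thesis by blast
qed

section \<open>Gluing along a strip\<close>

lemma div_eq_by_bounds:
  fixes L a k :: int
  assumes "L > 0" "k * L \<le> a" "a < k * L + L"
  shows "a div L = k"
  using int_div_pos_eq[of a L k "a - k * L"] assms by (simp add: algebra_simps)

lemma div_bounds:
  fixes L a :: int
  assumes "L > 0"
  shows "(a div L) * L \<le> a" "a < (a div L) * L + L"
proof -
  have "a = (a div L) * L + a mod L" by simp
  moreover have "0 \<le> a mod L" "a mod L < L" using assms by simp_all
  ultimately show "(a div L) * L \<le> a" "a < (a div L) * L + L" by linarith+
qed

text \<open>Cutting z into layers of width L along lin and
  shifting the k-th layer back by k*g gives a g-periodic configuration glued which equals z on
  the central layer and whose m-windows all occur in z.\<close>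
locale strip_gluing =
  fixes z Q1 Q2 :: "'s config" and \<alpha> \<beta> c m L h :: int and g :: "int \<times> int"
  assumes upper: "\<And>v. lin \<alpha> \<beta> v > c \<Longrightarrow> z v = Q1 v"
    and lower: "\<And>v. lin \<alpha> \<beta> v < -c \<Longrightarrow> z v = Q2 v"
    and translate: "\<And>x. Q1 x = Q2 (x - g)"
    and L_def: "L = lin \<alpha> \<beta> g"
    and wide: "c + m * (\<bar>\<alpha>\<bar> + \<bar>\<beta>\<bar>) < h" "2 * h \<le> L"
    and nonneg: "c \<ge> 0" "m \<ge> 0"
begin

definition layer :: "int \<times> int \<Rightarrow> int" where
  "layer v = (lin \<alpha> \<beta> v + h) div L"

definition glued :: "'s config" where
  "glued v = z (v - smul (layer v) g)"

lemma L_pos: "L > 0"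
proof -
  have "m * (\<bar>\<alpha>\<bar> + \<bar>\<beta>\<bar>) \<ge> 0" using nonneg by simp
  then show ?thesis using wide nonneg by linarith
qed

lemma layer_bounds: "layer v * L \<le> lin \<alpha> \<beta> v + h" "lin \<alpha> \<beta> v + h < layer v * L + L"
  unfolding layer_def using div_bounds[OF L_pos] by blast+

lemma layer_near:
  assumes w: "\<bar>lin \<alpha> \<beta> w - lin \<alpha> \<beta> c1\<bar> \<le> m * (\<bar>\<alpha>\<bar> + \<bar>\<beta>\<bar>)"
  defines "k \<equiv> layer c1"
  shows "layer w = k
    \<or> (layer w = k + 1 \<and> lin \<alpha> \<beta> (w - smul k g) > c \<and> lin \<alpha> \<beta> (w - smul (k + 1) g) < -c)
    \<or> (layer w = k - 1 \<and> lin \<alpha> \<beta> (w - smul k g) < -c \<and> lin \<alpha> \<beta> (w - smul (k - 1) g) > c)"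
proof -
  define \<mu> where "\<mu> = m * (\<bar>\<alpha>\<bar> + \<bar>\<beta>\<bar>)"
  have k: "k * L \<le> lin \<alpha> \<beta> c1 + h" "lin \<alpha> \<beta> c1 + h < k * L + L"
    using layer_bounds[of c1] k_def by simp_all
  have lin_shift: "lin \<alpha> \<beta> (w - smul j g) = lin \<alpha> \<beta> w - j * L" for j
    by (simp add: L_def)
  have b: "lin \<alpha> \<beta> w \<le> lin \<alpha> \<beta> c1 + \<mu>" "lin \<alpha> \<beta> w \<ge> lin \<alpha> \<beta> c1 - \<mu>"
    "h > c + \<mu>" "\<mu> \<ge> 0" "2 * h \<le> L" "(k + 1) * L = k * L + L" "(k - 1) * L = k * L - L"
    using w wide nonneg \<mu>_def by (simp_all add: algebra_simps)
  consider "k * L \<le> lin \<alpha> \<beta> w + h \<and> lin \<alpha> \<beta> w + h < k * L + L"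
    | "lin \<alpha> \<beta> w + h \<ge> k * L + L" | "lin \<alpha> \<beta> w + h < k * L"
    by linarith
  then show ?thesis
  proof cases
    case 1
    then show ?thesis
      unfolding layer_def by (intro disjI1 div_eq_by_bounds[OF L_pos]) simp_all
  next
    case 2
    then have "layer w = k + 1"
      unfolding layer_def by (intro div_eq_by_bounds[OF L_pos]) (use k b nonneg in linarith)+
    moreover have "lin \<alpha> \<beta> (w - smul k g) > c" "lin \<alpha> \<beta> (w - smul (k + 1) g) < -c"
      using 2 k b(1-5) nonneg lin_shift[of k] lin_shift[of "k + 1"] b(6) by linarith+
    ultimately show ?thesis by blast
  next
    case 3
    then have "layer w = k - 1"
      unfolding layer_def using k b nonneg by (intro div_eq_by_bounds[OF L_pos]) (simp_all add: algebra_simps)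
    moreover have "lin \<alpha> \<beta> (w - smul (k - 1) g) = lin \<alpha> \<beta> w - k * L + L"
      unfolding lin_shift using b(7) by simp
    then have "lin \<alpha> \<beta> (w - smul k g) < -c" "lin \<alpha> \<beta> (w - smul (k - 1) g) > c"
      using 3 k b(1-5) nonneg lin_shift[of k] by linarith+
    ultimately show ?thesis by blast
  qed
qed

lemma glued_near:
  assumes w: "\<bar>lin \<alpha> \<beta> w - lin \<alpha> \<beta> c1\<bar> \<le> m * (\<bar>\<alpha>\<bar> + \<bar>\<beta>\<bar>)"
  shows "glued w = z (w - smul (layer c1) g)"
  using layer_near[OF w]
proof (elim disjE conjE)
  let ?k = "layer c1"
  have shift_g: "w - smul (?k + 1) g = (w - smul ?k g) - g" "w - smul (?k - 1) g = (w - smul ?k g) + g"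
    by (simp_all add: prod_eq_iff algebra_simps)
  show ?thesis if "layer w = ?k"
    using that by (simp add: glued_def)
  show ?thesis if "layer w = ?k + 1" "lin \<alpha> \<beta> (w - smul ?k g) > c" "lin \<alpha> \<beta> (w - smul (?k + 1) g) < -c"
    using that upper lower translate[of "w - smul ?k g"] by (simp add: glued_def shift_g)
  show ?thesis if "layer w = ?k - 1" "lin \<alpha> \<beta> (w - smul ?k g) < -c" "lin \<alpha> \<beta> (w - smul (?k - 1) g) > c"
    using that upper lower translate[of "w - smul ?k g + g"] by (simp add: glued_def shift_g)
qed

lemma glued_occurs:
  assumes "dom P \<subseteq> box m" "occurs_in P glued"
  shows "occurs_in P z"
proof -
  obtain a b where ab: "\<forall>i j. (i, j) \<in> dom P \<longrightarrow> Some (glued (i + a, j + b)) = P (i, j)"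
    using assms(2) unfolding occurs_in_def by blast
  define k where "k = layer (a, b)"
  have "Some (z (i + (a - k * fst g), j + (b - k * snd g))) = P (i, j)" if ij: "(i, j) \<in> dom P" for i j
  proof -
    have "\<bar>lin \<alpha> \<beta> (i, j)\<bar> \<le> m * (\<bar>\<alpha>\<bar> + \<bar>\<beta>\<bar>)"
      using ij assms(1) lin_bound by blast
    moreover have "lin \<alpha> \<beta> (i + a, j + b) - lin \<alpha> \<beta> (a, b) = lin \<alpha> \<beta> (i, j)"
      by (simp add: lin_def algebra_simps)
    ultimately have "glued (i + a, j + b) = z ((i + a, j + b) - smul k g)"
      unfolding k_def by (intro glued_near) simp
    also have "(i + a, j + b) - smul k g = (i + (a - k * fst g), j + (b - k * snd g))"
      by (simp add: prod_eq_iff)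
    finally show ?thesis using ab ij by metis
  qed
  then show ?thesis unfolding occurs_in_def by blast
qed

text \<open>Translating by g moves every point one layer up, and glued compensates for it.\<close>
lemma period_glued: "period g glued"
  unfolding period_def
proof
  fix v
  have "lin \<alpha> \<beta> (v + g) + h = (lin \<alpha> \<beta> v + h) + 1 * L"
    by (simp add: L_def)
  then have "layer (v + g) = 1 + layer v"
    unfolding layer_def using L_pos by (simp only: div_mult_self1)
  moreover have "v + g - smul (1 + layer v) g = v - smul (layer v) g"
    by (simp add: prod_eq_iff algebra_simps)
  ultimately show "glued (v + g) = glued v"
    unfolding glued_def by (simp only:)
qed

lemma period_glued_parallel:
  assumes "lin \<alpha> \<beta> d = 0" "period d z"
  shows "period d glued"
  unfolding period_def
proof
  fix v
  have "layer (v + d) = layer v"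
    unfolding layer_def using assms(1) by simp
  moreover have "v + d - smul (layer v) g = (v - smul (layer v) g) + d"
    by (simp add: prod_eq_iff algebra_simps)
  ultimately have "glued (v + d) = z ((v - smul (layer v) g) + d)"
    unfolding glued_def by (simp only:)
  also have "\<dots> = glued v"
    using assms(2) unfolding glued_def period_def by blast
  finally show "glued (v + d) = glued v" .
qed

lemma glued_central:
  assumes "-h \<le> lin \<alpha> \<beta> v" "lin \<alpha> \<beta> v < h"
  shows "glued v = z v"
proof -
  have "layer v = 0"
    unfolding layer_def using assms wide(2) by (intro div_pos_pos_trivial) simp_all
  moreover have "v - smul 0 g = v"
    by (simp add: prod_eq_iff)
  ultimately show ?thesis by (simp add: glued_def)
qed

end

section \<open>Subshifts of finite type\<close>

abbreviation avoids :: "'s pattern set \<Rightarrow> 's config \<Rightarrow> bool" where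
  "avoids F x \<equiv> \<forall>P\<in>F. \<not> occurs_in P x"

lemma avoids_shift:
  assumes "avoids F x"
  shows "avoids F (shift s x)"
proof (intro ballI notI)
  fix P assume P: "P \<in> F" "occurs_in P (shift s x)"
  then obtain a b where ab: "\<forall>i j. (i, j) \<in> dom P \<longrightarrow> Some (shift s x (i + a, j + b)) = P (i, j)"
    unfolding occurs_in_def by blast
  have "(i + a, j + b) + s = (i + (a + fst s), j + (b + snd s))" for i j
    by (simp add: prod_eq_iff add_ac)
  then have "shift s x (i + a, j + b) = x (i + (a + fst s), j + (b + snd s))" for i j
    unfolding shift_def by presburger
  with ab have "occurs_in P x"
    unfolding occurs_in_def by (metis (no_types))
  with assms P(1) show False by blast
qed

lemma avoids_cyl_closed:
  assumes F: "\<forall>P\<in>F. finite_pattern P"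
  shows "cyl_closed {x. avoids F x}"
  unfolding cyl_closed_def
proof (intro allI impI CollectI ballI notI)
  fix x P
  assume approx: "\<forall>n. \<exists>y\<in>{x. avoids F x}. y \<in> cyl n x" and P: "P \<in> F" "occurs_in P x"
  then obtain a b where ab: "\<forall>i j. (i, j) \<in> dom P \<longrightarrow> Some (x (i + a, j + b)) = P (i, j)"
    unfolding occurs_in_def by blast
  obtain m where m: "dom P \<subseteq> box m"
    using F P(1) finite_in_box unfolding finite_pattern_def by blast
  obtain y where y: "avoids F y" "y \<in> cyl (m + \<bar>a\<bar> + \<bar>b\<bar>) x"
    using approx by blast
  have "Some (y (i + a, j + b)) = P (i, j)" if ij: "(i, j) \<in> dom P" for i j
  proof -
    have "\<bar>i\<bar> \<le> m" "\<bar>j\<bar> \<le> m"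
      using ij m by (auto simp: mem_box)
    then have "(i + a, j + b) \<in> box (m + \<bar>a\<bar> + \<bar>b\<bar>)"
      unfolding mem_box using abs_triangle_ineq[of i a] abs_triangle_ineq[of j b] by simp linarith
    then have "y (i + a, j + b) = x (i + a, j + b)"
      using y(2) unfolding cyl_def by blast
    then show ?thesis using ab ij by metis
  qed
  then have "occurs_in P y"
    unfolding occurs_in_def by blast
  with y(1) P(1) show False by blast
qed

lemma SFT_window:
  assumes "is_SFT X"
  obtains F m where "m \<ge> 0" "\<forall>P\<in>F. dom P \<subseteq> box m" "X = {x. avoids F x}"
    "cyl_closed X" "shift_inv X"
proof -
  obtain F where F: "finite F" "\<forall>P\<in>F. finite_pattern P" "X = {x. avoids F x}"
    using assms unfolding is_SFT_def by blast
  have "finite (\<Union>(dom ` F))"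
    using F(1,2) unfolding finite_pattern_def by blast
  then obtain m where "m \<ge> 0" "\<Union>(dom ` F) \<subseteq> box m"
    using finite_in_box by blast
  moreover have "cyl_closed X"
    using avoids_cyl_closed[OF F(2)] F(3) by simp
  moreover have "shift_inv X"
    unfolding shift_inv_def F(3) using avoids_shift by blast
  ultimately show ?thesis
    using that F(3) by blast
qed

section \<open>Fitting positions\<close>

lemma fits_cyl:
  assumes "\<forall>u\<in>box r. y u = x u"
  shows "fits p r y 0 \<longleftrightarrow> fits p r x 0"
  using assms unfolding fits_def by auto

lemma fits_shift: "fits p r (shift s z) v \<longleftrightarrow> fits p r z (v + s)"
proof -
  have "\<And>u. shift s z (v + u) = z ((v + s) + u)"
    unfolding shift_def by (simp add: add_ac)
  then show ?thesis unfolding fits_def by simp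
qed

lemma not_fitting_cyl_closed:
  assumes "cyl_closed X"
  shows "cyl_closed {w \<in> X. \<not> fits p r w 0}"
  unfolding cyl_closed_def
proof (intro allI impI)
  fix x assume approx: "\<forall>n. \<exists>y\<in>{w \<in> X. \<not> fits p r w 0}. y \<in> cyl n x"
  then have "x \<in> X"
    using assms unfolding cyl_closed_def by blast
  moreover obtain y where "y \<in> X" "\<not> fits p r y 0" "y \<in> cyl r x"
    using approx by blast
  moreover from this have "fits p r y 0 \<longleftrightarrow> fits p r x 0"
    by (intro fits_cyl) (simp add: cyl_def)
  ultimately show "x \<in> {w \<in> X. \<not> fits p r w 0}" by simp
qed

text \<open>The periods of p are seen by every r-block, so a configuration fitting everywhere inherits them.\<close>
lemma fits_period:
  assumes "fits p r z v" "r \<ge> 0" "period (r, 0) p" "period (0, r) p"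
  shows "z (v + (r, 0)) = z v" "z (v + (0, r)) = z v"
proof -
  obtain t where t: "\<forall>u\<in>box r. z (v + u) = p (t + u)"
    using assms(1) unfolding fits_def by blast
  have s: "(0::int \<times> int) \<in> box r" "((r, 0)::int \<times> int) \<in> box r" "((0, r)::int \<times> int) \<in> box r"
    using assms(2) by (simp_all add: mem_box)
  have "z v = p t"
    using t s(1) by (metis add_0_right)
  moreover have "z (v + (r, 0)) = p (t + (r, 0))" "z (v + (0, r)) = p (t + (0, r))"
    using t s(2,3) by blast+
  moreover have "p (t + (r, 0)) = p t" "p (t + (0, r)) = p t"
    using assms(3,4) unfolding period_def by blast+
  ultimately show "z (v + (r, 0)) = z v" "z (v + (0, r)) = z v" by simp_all
qed

lemma fits_everywhere_doubly_periodic: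
  assumes "\<forall>v. fits p r z v" "r > 0" "period (r, 0) p" "period (0, r) p"
  shows "doubly_periodic z"
proof -
  have "period (r, 0) z" "period (0, r) z"
    using fits_period[OF _ _ assms(3,4)] assms(1,2) unfolding period_def by auto
  then show ?thesis
    by (rule two_periods_doubly_periodic) (use assms(2) in simp)
qed

lemma fits_if_subpat_ge:
  assumes "subpat_ge p y"
  shows "fits p r y v"
proof -
  define P :: "'a pattern" where "P = (\<lambda>u. if u \<in> box r then Some (y (v + u)) else None)"
  have domP: "dom P = box r"
    unfolding P_def by (auto split: if_splits)
  have "occurs_in P y"
    unfolding occurs_in_def
  proof (rule exI[of _ "fst v"], rule exI[of _ "snd v"], intro allI impI)
    fix i j assume "(i, j) \<in> dom P"
    moreover have "v + (i, j) = (i + fst v, j + snd v)"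
      by (simp add: prod_eq_iff)
    ultimately show "Some (y (i + fst v, j + snd v)) = P (i, j)"
      using domP unfolding P_def by simp
  qed
  then have "occurs_in P p"
    using assms domP unfolding subpat_ge_def finite_pattern_def by simp
  then obtain a b where ab: "\<forall>i j. (i, j) \<in> dom P \<longrightarrow> Some (p (i + a, j + b)) = P (i, j)"
    unfolding occurs_in_def by blast
  have "y (v + u) = p ((a, b) + u)" if u: "u \<in> box r" for u
  proof -
    obtain i j where u': "u = (i, j)" by (cases u)
    have "Some (p (i + a, j + b)) = P (i, j)"
      using ab u u' domP by blast
    then show ?thesis
      using u u' unfolding P_def by (simp add: add.commute)
  qed
  then show ?thesis
    unfolding fits_def by blast
qed

section \<open>Repairing a configuration into a doubly periodic one\<close>

text \<open>If z fits everywhere outside a box, then outside the box it coincides with one translate of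
  p: the four half planes around the box pairwise overlap.\<close>
lemma copy_outside_box:
  assumes r: "r > 0" and p: "period (r, 0) p" "period (0, r) p"
    and outside: "\<And>v. v \<notin> box n \<Longrightarrow> fits p r z v"
  shows "\<exists>Q. period (r, 0) Q \<and> period (0, r) Q \<and> (\<forall>v. v \<notin> box n \<longrightarrow> z v = Q v)"
proof -
  have fits_half_plane: "\<forall>v. lin a b v > n \<longrightarrow> fits p r z v"
    if ab: "(a, b) \<in> {(1, 0), (-1, 0), (0, 1), (0, -1)}" for a b
  proof (intro allI impI)
    fix v assume "lin a b v > n"
    with ab have "v \<notin> box n" by (auto simp: lin_def mem_box)
    then show "fits p r z v" by (rule outside)
  qed
  note half_plane = aligned_copy_half_plane[OF r p fits_half_plane]
  define Q where "Q = aligned_copy p r z (n + 1, n + 1)"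
  have copy_Q: "aligned_copy p r z v = Q" if v: "v \<notin> box n" for v
  proof -
    have "fst v > n \<or> snd v > n \<or> fst v < -n \<or> snd v < -n"
      using v by (auto simp: mem_box)
    then show ?thesis
    proof (elim disjE)
      assume "fst v > n"
      then show ?thesis
        unfolding Q_def by (intro half_plane[of 1 0]) (simp_all add: lin_def)
    next
      assume "snd v > n"
      then show ?thesis
        unfolding Q_def by (intro half_plane[of 0 1]) (simp_all add: lin_def)
    next
      assume "fst v < -n"
      then have "aligned_copy p r z v = aligned_copy p r z (-n-1, n+1)"
        by (intro half_plane[of "-1" 0]) (simp_all add: lin_def)
      also have "\<dots> = Q"
        unfolding Q_def by (intro half_plane[of 0 1]) (simp_all add: lin_def)
      finally show ?thesis .
    next
      assume "snd v < -n"
      then have "aligned_copy p r z v = aligned_copy p r z (n+1, -n-1)"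
        by (intro half_plane[of 0 "-1"]) (simp_all add: lin_def)
      also have "\<dots> = Q"
        unfolding Q_def by (intro half_plane[of 1 0]) (simp_all add: lin_def)
      finally show ?thesis .
    qed
  qed
  have "z v = Q v" if v: "v \<notin> box n" for v
    using fits_self[OF outside[OF v]] copy_Q[OF v] r by simp
  moreover have "period (r, 0) Q" "period (0, r) Q"
    unfolding Q_def using p by (simp_all add: period_aligned_copy)
  ultimately show ?thesis by blast
qed

lemma glue_strip:
  fixes z Qup Qlow :: "'s config"
  assumes Xz: "avoids F z" and Fm: "\<forall>P\<in>F. dom P \<subseteq> box m" and m0: "m \<ge> 0" and c0: "c \<ge> 0"
    and upper: "\<And>v. lin \<alpha> \<beta> v > c \<Longrightarrow> z v = Qup v"
    and lower: "\<And>v. lin \<alpha> \<beta> v < -c \<Longrightarrow> z v = Qlow v"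
    and translate: "\<And>x. Qup x = Qlow (x - g)"
    and wide: "c + m * (\<bar>\<alpha>\<bar> + \<bar>\<beta>\<bar>) < h" "2 * h \<le> lin \<alpha> \<beta> g"
  obtains y where "avoids F y" "period g y" "\<And>d. lin \<alpha> \<beta> d = 0 \<Longrightarrow> period d z \<Longrightarrow> period d y"
    "\<And>v. \<bar>lin \<alpha> \<beta> v\<bar> < h \<Longrightarrow> y v = z v" "\<And>v. \<exists>k. y v = z (v - smul k g)"
proof -
  interpret G: strip_gluing z Qup Qlow \<alpha> \<beta> c m "lin \<alpha> \<beta> g" h g
    by unfold_locales (fact upper lower translate wide c0 m0 refl)+
  have "avoids F G.glued"
    using G.glued_occurs Fm Xz by blast
  moreover have "G.glued v = z v" if "\<bar>lin \<alpha> \<beta> v\<bar> < h" for v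
    using that by (intro G.glued_central) simp_all
  moreover have "\<exists>k. G.glued v = z (v - smul k g)" for v
    unfolding G.glued_def by blast
  ultimately show thesis
    using that G.period_glued G.period_glued_parallel by blast
qed

text \<open>A configuration that is (r,0)- and (0,r)-periodic outside a box can be made doubly periodic
  by gluing twice (horizontally, then vertically), without creating forbidden patterns and
  without changing it on a given box around the origin.\<close>
lemma periodize_bounded_defect:
  fixes z Q :: "('s::finite) config"
  assumes Xz: "avoids F z" and Fm: "\<forall>P\<in>F. dom P \<subseteq> box m" and m0: "m \<ge> 0"
    and r: "r > 0" and Q: "period (r, 0) Q" "period (0, r) Q"
    and n0: "n \<ge> 0" and zQ: "\<And>v. v \<notin> box n \<Longrightarrow> z v = Q v" and k0: "k \<ge> 0"
  shows "\<exists>y. avoids F y \<and> doubly_periodic y \<and> (\<forall>u\<in>box k. y u = z u)"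
proof -
  define h where "h = n + m + k + 1"
  define M where "M = r * (2 * h)"
  have h0: "h > 0" using n0 m0 k0 h_def by simp
  have hM: "2 * h \<le> M"
    using mult_right_mono[of 1 r "2 * h"] r h0 unfolding M_def by simp
  have "(M, 0) = smul (2 * h) (r, 0)" "(0, M) = smul (2 * h) (0, r)"
    by (simp_all add: M_def prod_eq_iff mult.commute)
  then have QM: "period (M, 0) Q" "period (0, M) Q"
    using period_smul Q by metis+
  have shift_M: "\<And>x. Q x = Q (x - (M, 0))" "\<And>x. Q x = Q (x - (0, M))"
    using period_sub[OF QM(1)] period_sub[OF QM(2)] by simp_all
  have wide: "n + m * (\<bar>1\<bar> + \<bar>0\<bar>) < h" "2 * h \<le> lin 1 0 (M, 0)"
    "n + m * (\<bar>0\<bar> + \<bar>1\<bar>) < h" "2 * h \<le> lin 0 1 (0, M)"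
    using h_def hM k0 by (simp_all add: lin_def)
  have "\<And>v. lin 1 0 v > n \<Longrightarrow> z v = Q v" "\<And>v. lin 1 0 v < -n \<Longrightarrow> z v = Q v"
    by (rule zQ, auto simp: lin_def mem_box)+
  then obtain y1 where y1: "avoids F y1" "period (M, 0) y1" "\<And>v. \<bar>lin 1 0 v\<bar> < h \<Longrightarrow> y1 v = z v"
    and y1_z: "\<And>v. \<exists>j. y1 v = z (v - smul j (M, 0))"
    using glue_strip[where Qup = Q and Qlow = Q and g = "(M, 0)", OF Xz Fm m0 n0 _ _ shift_M(1) wide(1,2)]
    by metis
  have y1_Q: "y1 v = Q v" if "lin 0 1 v > n \<or> lin 0 1 v < -n" for v
  proof -
    obtain j where "y1 v = z (v - smul j (M, 0))"
      using y1_z by blast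
    also have "\<dots> = Q (v - smul j (M, 0))"
      by (rule zQ) (use that in \<open>auto simp: lin_def mem_box\<close>)
    also have "\<dots> = Q v"
      by (rule period_sub[OF period_smul[OF QM(1)]])
    finally show ?thesis .
  qed
  have "\<And>v. lin 0 1 v > n \<Longrightarrow> y1 v = Q v" "\<And>v. lin 0 1 v < -n \<Longrightarrow> y1 v = Q v"
    using y1_Q by blast+
  then obtain y2 where y2: "avoids F y2" "period (0, M) y2"
    "\<And>d. lin 0 1 d = 0 \<Longrightarrow> period d y1 \<Longrightarrow> period d y2" "\<And>v. \<bar>lin 0 1 v\<bar> < h \<Longrightarrow> y2 v = y1 v"
    using glue_strip[where Qup = Q and Qlow = Q and g = "(0, M)", OF y1(1) Fm m0 n0 _ _ shift_M(2) wide(3,4)]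
    by metis
  have "doubly_periodic y2"
    using two_periods_doubly_periodic[OF y2(3)[OF _ y1(2)] y2(2)] hM h0 by (simp add: lin_def)
  moreover have "y2 u = z u" if "u \<in> box k" for u
    using that y1(3) y2(4) h_def n0 m0 by (simp add: lin_def mem_box)
  ultimately show ?thesis
    using y2(1) by blast
qed

text \<open>Some period of p crosses any given strip parallel to a nonzero (\<alpha>,\<beta>)-level line:
  multiples of r(\<alpha>,\<beta>) are periods of p.\<close>
lemma period_crossing:
  assumes r: "r > 0" and p: "period (r, 0) p" "period (0, r) p" and nonzero: "(\<alpha>, \<beta>) \<noteq> (0, 0)"
  shows "\<exists>q. period q p \<and> B \<le> lin \<alpha> \<beta> q"
proof -
  define q where "q = smul (r * \<bar>B\<bar>) (\<alpha>, \<beta>)"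
  have "smul (r * \<bar>B\<bar>) (\<alpha>, \<beta>) = smul (\<bar>B\<bar> * \<alpha>) (r, 0) + smul (\<bar>B\<bar> * \<beta>) (0, r)"
    by (simp add: smul_def)
  then have "period q p"
    unfolding q_def using period_add period_smul p by metis
  moreover have "0 < \<alpha> * \<alpha> + \<beta> * \<beta>"
    using nonzero by (auto simp: sum_squares_gt_zero_iff)
  then have "1 * 1 \<le> r * (\<alpha> * \<alpha> + \<beta> * \<beta>)"
    using r by (intro mult_mono) simp_all
  then have "\<bar>B\<bar> * 1 \<le> \<bar>B\<bar> * (r * (\<alpha> * \<alpha> + \<beta> * \<beta>))"
    by (intro mult_left_mono) simp_all
  then have "B \<le> lin \<alpha> \<beta> q"
    unfolding q_def by (simp add: lin_def algebra_simps)
  ultimately show ?thesis by blast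
qed

text \<open>Strip version: z has a period d, and on the two sides of a strip parallel to d it coincides
  with translates of p.  One gluing across the strip, by a vector g that maps the lower translate
  onto the upper one, gives a configuration with the independent periods d and g.\<close>
lemma periodize_strip_defect:
  fixes z p :: "('s::finite) config"
  assumes Xz: "avoids F z" and Fm: "\<forall>P\<in>F. dom P \<subseteq> box m" and m0: "m \<ge> 0"
    and r: "r > 0" and p: "period (r, 0) p" "period (0, r) p"
    and d: "period d z" "d \<noteq> 0" and c0: "c \<ge> 0" and k0: "k \<ge> 0"
    and upper: "\<And>v. lin (- snd d) (fst d) v > c \<Longrightarrow> z v = p (v + s1)"
    and lower: "\<And>v. lin (- snd d) (fst d) v < -c \<Longrightarrow> z v = p (v + s2)"
  shows "\<exists>y. avoids F y \<and> doubly_periodic y \<and> (\<forall>u\<in>box k. y u = z u)"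
proof -
  define \<alpha> \<beta> where "\<alpha> = - snd d" and "\<beta> = fst d"
  define h where "h = c + m * (\<bar>\<alpha>\<bar> + \<bar>\<beta>\<bar>) + k * (\<bar>\<alpha>\<bar> + \<bar>\<beta>\<bar>) + 1"
  have "(\<alpha>, \<beta>) \<noteq> (0, 0)"
    using d(2) by (auto simp: \<alpha>_def \<beta>_def prod_eq_iff)
  then obtain q where q: "period q p" "2 * h - lin \<alpha> \<beta> (s2 - s1) \<le> lin \<alpha> \<beta> q"
    using period_crossing[OF r p] by blast
  define g where "g = s2 - s1 + q"
  have translate: "p (x + s1) = p ((x - g) + s2)" for x
    using period_sub[OF q(1), of "x + s1"] by (simp add: g_def algebra_simps)
  have k_nonneg: "0 \<le> k * (\<bar>\<alpha>\<bar> + \<bar>\<beta>\<bar>)" and m_nonneg: "0 \<le> m * (\<bar>\<alpha>\<bar> + \<bar>\<beta>\<bar>)"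
    using k0 m0 by simp_all
  have "lin \<alpha> \<beta> g = lin \<alpha> \<beta> (s2 - s1) + lin \<alpha> \<beta> q"
    by (simp add: g_def)
  then have wide: "c + m * (\<bar>\<alpha>\<bar> + \<bar>\<beta>\<bar>) < h" "2 * h \<le> lin \<alpha> \<beta> g"
    using q(2) k_nonneg unfolding h_def by linarith+
  obtain y where y: "avoids F y" "period g y" "\<And>e. lin \<alpha> \<beta> e = 0 \<Longrightarrow> period e z \<Longrightarrow> period e y"
    "\<And>v. \<bar>lin \<alpha> \<beta> v\<bar> < h \<Longrightarrow> y v = z v"
    using glue_strip[where Qup = "\<lambda>x. p (x + s1)" and Qlow = "\<lambda>x. p (x + s2)" and g = g,
      OF Xz Fm m0 c0 _ _ translate wide] upper lower unfolding \<alpha>_def \<beta>_def by metis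
  have "0 < lin \<alpha> \<beta> g"
    using wide c0 m_nonneg by linarith
  then have "doubly_periodic y"
    using two_periods_doubly_periodic[OF y(3)[OF _ d(1)] y(2)]
    by (simp add: lin_def \<alpha>_def \<beta>_def algebra_simps)
  moreover have "y u = z u" if "u \<in> box k" for u
  proof -
    have "\<bar>lin \<alpha> \<beta> u\<bar> < h"
      using lin_bound[OF that, of \<alpha> \<beta>] m_nonneg c0 unfolding h_def by linarith
    then show ?thesis by (rule y(4))
  qed
  ultimately show ?thesis
    using y(1) by blast
qed

lemma translates_in_strip:
  assumes "infinite D" "finite ((\<lambda>v. shift v z) ` D)" "\<not> doubly_periodic z"
  shows "\<exists>d c. period d z \<and> d \<noteq> 0 \<and> c \<ge> 0 \<and> (\<forall>v\<in>D. \<bar>lin (- snd d) (fst d) v\<bar> \<le> c)"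
proof -
  have "\<not> inj_on (\<lambda>v. shift v z) D"
    using assms(1,2) finite_imageD by blast
  then obtain v v' where vv: "v \<noteq> v'" "shift v z = shift v' z"
    unfolding inj_on_def by blast
  define d where "d = v - v'"
  have d: "period d z" "d \<noteq> 0"
    unfolding d_def using shift_eq_period[OF vv(2)] vv(1) by simp_all
  obtain D0 where D0: "D0 \<subseteq> D" "finite D0" "(\<lambda>v. shift v z) ` D = (\<lambda>v. shift v z) ` D0"
    using finite_subset_image[OF assms(2) subset_refl] by blast
  define c where "c = (\<Sum>w\<in>D0. \<bar>lin (- snd d) (fst d) w\<bar>)"
  have "\<bar>lin (- snd d) (fst d) w\<bar> \<le> c" if w: "w \<in> D" for w
  proof -
    obtain w0 where w0: "w0 \<in> D0" "shift w z = shift w0 z"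
      using w D0(3) by (metis imageE imageI)
    have "period (w - w0) z"
      using shift_eq_period w0(2) by blast
    then have "\<not> fst d * snd (w - w0) - snd d * fst (w - w0) \<noteq> 0"
      using two_periods_doubly_periodic[OF d(1)] assms(3) by blast
    then have "lin (- snd d) (fst d) (w - w0) = 0"
      by (simp add: lin_def algebra_simps)
    moreover have "\<bar>lin (- snd d) (fst d) w0\<bar> \<le> c"
      unfolding c_def using w0(1) D0(2) by (intro member_le_sum) auto
    ultimately show ?thesis by simp
  qed
  moreover have "c \<ge> 0"
    unfolding c_def by (rule sum_nonneg) simp
  ultimately show ?thesis using d by blast
qed

lemma copies_beside_strip:
  assumes r: "r > 0" and p: "period (r, 0) p" "period (0, r) p" and d: "d \<noteq> 0"
    and strip: "\<forall>v\<in>{v. \<not> fits p r z v}. \<bar>lin (- snd d) (fst d) v\<bar> \<le> c"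
  obtains s1 s2 where "\<And>v. lin (- snd d) (fst d) v > c \<Longrightarrow> z v = p (v + s1)"
    "\<And>v. lin (- snd d) (fst d) v < -c \<Longrightarrow> z v = p (v + s2)"
proof -
  define \<alpha> \<beta> where "\<alpha> = - snd d" and "\<beta> = fst d"
  have outside_strip: "fits p r z v" if "c < \<bar>lin \<alpha> \<beta> v\<bar>" for v
  proof (rule ccontr)
    assume "\<not> fits p r z v"
    then have "\<bar>lin \<alpha> \<beta> v\<bar> \<le> c"
      using strip unfolding \<alpha>_def \<beta>_def by blast
    with that show False by simp
  qed
  have fit: "\<forall>v. lin \<alpha> \<beta> v > c \<longrightarrow> fits p r z v" "\<forall>v. lin (-\<alpha>) (-\<beta>) v > c \<longrightarrow> fits p r z v"
    by (intro allI impI outside_strip; simp)+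
  have nonzero: "(\<alpha>, \<beta>) \<noteq> (0, 0)" "(-\<alpha>, -\<beta>) \<noteq> (0, 0)"
    using d unfolding \<alpha>_def \<beta>_def by (auto simp: prod_eq_iff)
  obtain s1 where s1: "\<forall>v. lin \<alpha> \<beta> v > c \<longrightarrow> z v = p (v + s1)"
    using copy_on_half_plane[OF r p nonzero(1) fit(1)] by blast
  obtain s2 where s2: "\<forall>v. lin (-\<alpha>) (-\<beta>) v > c \<longrightarrow> z v = p (v + s2)"
    using copy_on_half_plane[OF r p nonzero(2) fit(2)] by blast
  have "z v = p (v + s2)" if "lin \<alpha> \<beta> v < -c" for v
  proof -
    have "lin (-\<alpha>) (-\<beta>) v > c" using that by simp
    then show ?thesis using s2 by blast
  qed
  with s1 that show thesis
    unfolding \<alpha>_def \<beta>_def by blast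
qed

text \<open>The non-fitting positions
  are either bounded or confined to a strip.\<close>
lemma periodic_repair:
  fixes z p :: "('s::finite) config"
  assumes Xz: "avoids F z" and Fm: "\<forall>P\<in>F. dom P \<subseteq> box m" and m0: "m \<ge> 0"
    and r: "r > 0" and p: "period (r, 0) p" "period (0, r) p"
    and bad: "\<not> fits p r z 0" and aperiodic: "\<not> doubly_periodic z"
    and finite_translates: "finite ((\<lambda>v. shift v z) ` {v. \<not> fits p r z v})"
  shows "\<exists>y. avoids F y \<and> doubly_periodic y \<and> \<not> fits p r y 0"
proof -
  have r0: "r \<ge> 0" using r by simp
  have "\<exists>y. avoids F y \<and> doubly_periodic y \<and> (\<forall>u\<in>box r. y u = z u)"
  proof (cases "finite {v. \<not> fits p r z v}")
    case True
    then obtain n where n: "n \<ge> 0" "{v. \<not> fits p r z v} \<subseteq> box n"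
      using finite_in_box by blast
    then have "\<And>v. v \<notin> box n \<Longrightarrow> fits p r z v"
      by blast
    then obtain Q where Q: "period (r, 0) Q" "period (0, r) Q" "\<forall>v. v \<notin> box n \<longrightarrow> z v = Q v"
      using copy_outside_box[OF r p] by blast
    then have "\<And>v. v \<notin> box n \<Longrightarrow> z v = Q v"
      by blast
    then show ?thesis
      by (rule periodize_bounded_defect[OF Xz Fm m0 r Q(1,2) n(1) _ r0])
  next
    case False
    then obtain d c where d: "period d z" "d \<noteq> 0" "c \<ge> 0"
      and strip: "\<forall>v\<in>{v. \<not> fits p r z v}. \<bar>lin (- snd d) (fst d) v\<bar> \<le> c"
      using translates_in_strip[OF _ finite_translates aperiodic] by blast
    obtain s1 s2 where "\<And>v. lin (- snd d) (fst d) v > c \<Longrightarrow> z v = p (v + s1)"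
      "\<And>v. lin (- snd d) (fst d) v < -c \<Longrightarrow> z v = p (v + s2)"
      using copies_beside_strip[OF r p d(2) strip] by blast
    then show ?thesis
      by (rule periodize_strip_defect[OF Xz Fm m0 r p d r0])
  qed
  then obtain y where y: "avoids F y" "doubly_periodic y" "\<forall>u\<in>box r. y u = z u"
    by blast
  then have "\<not> fits p r y 0"
    using bad fits_cyl[OF y(3)] by simp
  with y(1,2) show ?thesis by blast
qed

lemma non_fitting_point_with_finitely_many_defects:
  fixes X :: "('s::finite) config set"
  assumes X: "cyl_closed X" "shift_inv X" "countable X" and z1: "z1 \<in> X" "\<not> fits p r z1 v1"
  shows "\<exists>z\<in>X. \<not> fits p r z 0 \<and> finite ((\<lambda>v. shift v z) ` {v. \<not> fits p r z v})"
proof -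
  define E where "E = {w \<in> X. \<not> fits p r w 0}"
  have E: "cyl_closed E"
    unfolding E_def by (rule not_fitting_cyl_closed[OF X(1)])
  have in_E: "shift v w \<in> E" if "w \<in> X" "\<not> fits p r w v" for w v
  proof -
    have "shift v w \<in> X"
      using that(1) X(2) unfolding shift_inv_def by blast
    then show ?thesis
      using that(2) fits_shift[of p r v w 0] unfolding E_def by simp
  qed
  have "shift v1 z1 \<in> X \<inter> E"
    using in_E[OF z1] unfolding E_def by blast
  then obtain z where z: "z \<in> X \<inter> E" "\<forall>V. (\<forall>v\<in>V. shift v z \<in> E) \<longrightarrow> finite ((\<lambda>v. shift v z) ` V)"
    using finite_translates_in[OF X E] by blast
  have "\<forall>v\<in>{v. \<not> fits p r z v}. shift v z \<in> E"
    using in_E z(1) by blast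
  then have "finite ((\<lambda>v. shift v z) ` {v. \<not> fits p r z v})"
    by (rule mp[OF spec[OF z(2)]])
  moreover have "z \<in> X" "\<not> fits p r z 0"
    using z(1) unfolding E_def by auto
  ultimately show ?thesis by blast
qed

text \<open>If all doubly periodic points of X are equivalent but X has two inequivalent points,
  some point of X has a position not fitting into p, whenever p has periods (r,0) and (0,r):
  points fitting everywhere are doubly periodic.\<close>
lemma non_fitting_point_exists:
  assumes equiv: "\<And>x y. x \<in> X \<Longrightarrow> y \<in> X \<Longrightarrow> doubly_periodic x \<Longrightarrow> doubly_periodic y \<Longrightarrow> subpat_equiv x y"
    and xy: "x0 \<in> X" "y0 \<in> X" "\<not> subpat_equiv x0 y0"
    and r: "r > 0" "period (r, 0) p" "period (0, r) p"
  shows "\<exists>z\<in>X. \<exists>v. \<not> fits p r z v"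
proof -
  have "\<not> (\<forall>v. fits p r x0 v) \<or> \<not> (\<forall>v. fits p r y0 v)"
    using fits_everywhere_doubly_periodic[OF _ r] equiv[OF xy(1,2)] xy(3) by blast
  with xy(1,2) show ?thesis by blast
qed

theorem mainTheorem11:
  fixes X :: "('s::finite) config set"
  assumes "is_SFT X"
    and "countable X"
    and "\<exists>x\<in>X. \<exists>y\<in>X. \<not> subpat_equiv x y"
  shows "\<exists>x\<in>X. \<exists>y\<in>X. doubly_periodic x \<and> doubly_periodic y \<and> \<not> subpat_equiv x y"
proof (rule ccontr)
  assume "\<not> ?thesis"
  then have equiv: "subpat_equiv x y" if "x \<in> X" "y \<in> X" "doubly_periodic x" "doubly_periodic y" for x y
    using that by blast
  obtain F m where F: "m \<ge> 0" "\<forall>P\<in>F. dom P \<subseteq> box m" "X = {x. avoids F x}"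
    and X: "cyl_closed X" "shift_inv X"
    by (rule SFT_window[OF assms(1)])
  obtain x0 y0 where xy: "x0 \<in> X" "y0 \<in> X" "\<not> subpat_equiv x0 y0"
    using assms(3) by blast
  obtain p where p: "p \<in> X" "doubly_periodic p"
    using doubly_periodic_point_exists[OF X assms(2)] xy(1) by blast
  obtain r where r: "r > 0" "period (r, 0) p" "period (0, r) p"
    using doubly_periodic_periods[OF p(2)] by blast
  have fit: "fits p r y v" if "y \<in> X" "doubly_periodic y" for y v
    using equiv[OF p(1) that(1) p(2) that(2)] unfolding subpat_equiv_def by (blast intro: fits_if_subpat_ge)
  obtain z1 v1 where "z1 \<in> X" "\<not> fits p r z1 v1"
    using non_fitting_point_exists[OF equiv xy r] by blast
  then obtain z where z: "z \<in> X" "\<not> fits p r z 0" "finite ((\<lambda>v. shift v z) ` {v. \<not> fits p r z v})"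
    using non_fitting_point_with_finitely_many_defects[OF X assms(2)] by blast
  have "avoids F z"
    using z(1) F(3) by simp
  moreover have "\<not> doubly_periodic z"
    using fit[OF z(1)] z(2) by blast
  ultimately obtain y where "avoids F y" "doubly_periodic y" "\<not> fits p r y 0"
    using periodic_repair[OF _ F(2,1) r z(2) _ z(3)] by blast
  then show False
    using fit F(3) by simp
qed

end
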